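(* There is a weight-preserving bijection from $\mathcal{P}3_{o}$ to $\mathcal{D}_{o}\times\mathcal{D}_{4,2}$.
   Context: A partition of $n$ is a non-increasing finite sequence of positive integers (parts) summing to $n$; its weight is the sum of its parts. $\mathcal{P}3_{o}$ denotes the set of partitions into odd parts in which each part size occurs at most $3$ times. $\mathcal{D}_{o}$ denotes the set of partitions into distinct odd parts. $\mathcal{D}_{4,2}$ denotes the set of partitions into distinct parts congruent to $2$ modulo $4$. The weight of a pair of partitions is the sum of the weights of its components; a bijection is weight-preserving if each object and its image have the same weight. *)

theory Defs
  imports Main
begin

definition is_partition :: "nat list \<Rightarrow> bool" where
  "is_partition xs \<longleftrightarrow> sorted_wrt (\<ge>) xs \<and> (\<forall>x\<in>set xs. 0 < x)"

definition weight :: "nat list \<Rightarrow> nat" where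
  "weight xs = sum_list xs"

definition P3o :: "nat list set" where
  "P3o = {xs. is_partition xs \<and> (\<forall>x\<in>set xs. odd x) \<and> (\<forall>x. count_list xs x \<le> 3)}"

definition Do :: "nat list set" where
  "Do = {xs. is_partition xs \<and> distinct xs \<and> (\<forall>x\<in>set xs. odd x)}"

definition D42 :: "nat list set" where
  "D42 = {xs. is_partition xs \<and> distinct xs \<and> (\<forall>x\<in>set xs. x mod 4 = 2)}"

end

theory Submission
  imports Defs "HOL-Library.Multiset"
begin

text \<open>Write the multiplicity \<open>m \<le> 3\<close> of each part \<open>x\<close> in binary, \<open>m = e + 2 d\<close> with
  \<open>e, d \<in> {0, 1}\<close>. The parts with \<open>e = 1\<close> form a partition into distinct odd parts; the
  parts with \<open>d = 1\<close>, each doubled, form a partition into distinct parts \<open>\<equiv> 2 (mod 4)\<close>, as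
  doubling maps the odd numbers bijectively onto these. The weight is preserved because \<open>x\<close>
  contributes \<open>m x = e x + d (2 x)\<close> on both sides.\<close>

lemma is_partition_iff_sorted_rev: "is_partition xs \<longleftrightarrow> sorted (rev xs) \<and> 0 \<notin> set xs"
  by (auto simp: is_partition_def sorted_wrt_rev intro: gr0I)

lemma partition_eqI:
  assumes "is_partition xs" "is_partition ys" "mset xs = mset ys"
  shows "xs = ys"
proof -
  have "rev xs = sort (rev ys)"
    using assms by (intro properties_for_sort[symmetric]) (simp_all add: is_partition_iff_sorted_rev)
  also have "\<dots> = rev ys"
    using assms(2) by (simp add: is_partition_iff_sorted_rev sorted_sort_id)
  finally show ?thesis by simp
qed

definition partition_of :: "nat multiset \<Rightarrow> nat list" where
  "partition_of M = rev (sorted_list_of_multiset M)"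

lemma mset_partition_of [simp]: "mset (partition_of M) = M"
  by (simp add: partition_of_def)

lemma set_partition_of [simp]: "set (partition_of M) = set_mset M"
  by (simp add: partition_of_def)


lemma is_partition_partition_of: "is_partition (partition_of M) \<longleftrightarrow> 0 \<notin># M"
  by (simp add: partition_of_def is_partition_iff_sorted_rev)

lemma weight_partition_of: "weight (partition_of M) = \<Sum>\<^sub># M"
  by (metis mset_partition_of sum_mset_sum_list weight_def)

lemma partition_of_mset:
  assumes "is_partition xs"
  shows "partition_of (mset xs) = xs"
proof (rule partition_eqI[OF _ assms])
  show "is_partition (partition_of (mset xs))"
    using assms unfolding is_partition_partition_of by (auto simp: is_partition_def)
qed simp

lemma bij_betw_mset_partitions:
  assumes "0 \<notin> S"
  shows "bij_betw mset {xs. is_partition xs \<and> set xs \<subseteq> S \<and> P (mset xs)}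
                      {M. set_mset M \<subseteq> S \<and> P M}"
proof (rule bij_betw_byWitness[where f' = partition_of])
  show "\<forall>xs\<in>{xs. is_partition xs \<and> set xs \<subseteq> S \<and> P (mset xs)}. partition_of (mset xs) = xs"
    by (simp add: partition_of_mset)
  show "partition_of ` {M. set_mset M \<subseteq> S \<and> P M} \<subseteq> {xs. is_partition xs \<and> set xs \<subseteq> S \<and> P (mset xs)}"
    using assms by (auto simp: is_partition_partition_of)
qed auto

definition partition_of_set :: "nat set \<Rightarrow> nat list" where
  "partition_of_set A = partition_of (mset_set A)"

lemma distinct_partition_of_set: "distinct (partition_of_set A)"
  by (simp add: partition_of_set_def partition_of_def)

lemma weight_partition_of_set: "weight (partition_of_set A) = \<Sum>A"
  by (simp add: partition_of_set_def weight_partition_of sum_unfold_sum_mset)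

lemma bij_betw_partition_of_set:
  assumes "0 \<notin> S"
  shows "bij_betw partition_of_set (Fpow S) {xs. is_partition xs \<and> distinct xs \<and> set xs \<subseteq> S}"
proof (rule bij_betw_byWitness[where f' = set])
  show "\<forall>xs\<in>{xs. is_partition xs \<and> distinct xs \<and> set xs \<subseteq> S}. partition_of_set (set xs) = xs"
    by (simp add: partition_of_set_def mset_set_set partition_of_mset)
  show "partition_of_set ` Fpow S \<subseteq> {xs. is_partition xs \<and> distinct xs \<and> set xs \<subseteq> S}"
    using assms distinct_partition_of_set
    by (auto simp: Fpow_def partition_of_set_def is_partition_partition_of)
qed (auto simp: Fpow_def partition_of_set_def)

definition binary_split :: "'a multiset \<Rightarrow> 'a set \<times> 'a set" where
  "binary_split M = ({x. odd (count M x)}, {x. 2 \<le> count M x})"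

definition binary_merge :: "'a set \<Rightarrow> 'a set \<Rightarrow> 'a multiset" where
  "binary_merge A H = mset_set A + mset_set H + mset_set H"

lemma count_binary_merge:
  assumes "finite A" "finite H"
  shows "count (binary_merge A H) x = of_bool (x \<in> A) + 2 * of_bool (x \<in> H)"
  using assms by (simp add: binary_merge_def count_mset_set')

lemma set_mset_binary_merge:
  assumes "finite A" "finite H"
  shows "set_mset (binary_merge A H) = A \<union> H"
  using assms by (auto simp: binary_merge_def)

lemma binary_split_in_Fpow: "binary_split M \<in> Fpow (set_mset M) \<times> Fpow (set_mset M)"
proof -
  have "{x. odd (count M x)} \<subseteq> set_mset M" "{x. 2 \<le> count M x} \<subseteq> set_mset M"
    by (auto simp: odd_pos simp flip: count_greater_zero_iff)
  then show ?thesis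
    by (auto simp: binary_split_def Fpow_def intro: finite_subset)
qed

lemma binary_split_merge:
  assumes "finite A" "finite H"
  shows "binary_split (binary_merge A H) = (A, H)"
  using assms by (auto simp: binary_split_def count_binary_merge)

lemma binary_digits: "n \<le> 3 \<Longrightarrow> of_bool (odd n) + 2 * of_bool (2 \<le> n) = (n::nat)"
  unfolding of_bool_def by presburger

lemma binary_merge_split:
  assumes "\<forall>x. count M x \<le> 3"
  shows "case_prod binary_merge (binary_split M) = M"
proof (rule multiset_eqI)
  fix x
  have "finite {x. odd (count M x)}" "finite {x. 2 \<le> count M x}"
    using binary_split_in_Fpow[of M] by (simp_all add: binary_split_def Fpow_def)
  then show "count (case_prod binary_merge (binary_split M)) x = count M x"
    using assms by (simp add: binary_split_def count_binary_merge binary_digits)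
qed

lemma bij_betw_binary_split:
  "bij_betw binary_split {M. set_mset M \<subseteq> S \<and> (\<forall>x. count M x \<le> 3)} (Fpow S \<times> Fpow S)"
proof (rule bij_betw_byWitness[where f' = "case_prod binary_merge"])
  show "binary_split ` {M. set_mset M \<subseteq> S \<and> (\<forall>x. count M x \<le> 3)} \<subseteq> Fpow S \<times> Fpow S"
  proof (rule image_subsetI)
    fix M assume "M \<in> {M. set_mset M \<subseteq> S \<and> (\<forall>x. count M x \<le> 3)}"
    then have "Fpow (set_mset M) \<subseteq> Fpow S" by (simp add: Fpow_mono)
    then show "binary_split M \<in> Fpow S \<times> Fpow S"
      using binary_split_in_Fpow[of M] by (auto simp: mem_Times_iff)
  qed
  show "case_prod binary_merge ` (Fpow S \<times> Fpow S) \<subseteq> {M. set_mset M \<subseteq> S \<and> (\<forall>x. count M x \<le> 3)}"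
    by (auto simp: Fpow_def count_binary_merge set_mset_binary_merge)
  show "\<forall>M\<in>{M. set_mset M \<subseteq> S \<and> (\<forall>x. count M x \<le> 3)}. case_prod binary_merge (binary_split M) = M"
    by (simp add: binary_merge_split)
  show "\<forall>AH\<in>Fpow S \<times> Fpow S. binary_split (case_prod binary_merge AH) = AH"
    by (auto simp: binary_split_merge Fpow_def)
qed

lemma sum_mset_binary_split:
  fixes M :: "'a::comm_semiring_1 multiset"
  assumes "\<forall>x. count M x \<le> 3" "binary_split M = (A, H)"
  shows "\<Sum>\<^sub># M = \<Sum>A + 2 * \<Sum>H"
proof -
  have "\<Sum>\<^sub># M = \<Sum>\<^sub># (binary_merge A H)"
    using binary_merge_split[OF assms(1)] assms(2) by simp
  also have "\<dots> = \<Sum>A + 2 * \<Sum>H"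
    by (simp add: binary_merge_def sum_unfold_sum_mset mult_2 add.assoc)
  finally show ?thesis .
qed

lemma bij_betw_image_Fpow:
  assumes "bij_betw f A B"
  shows "bij_betw (image f) (Fpow A) (Fpow B)"
proof -
  have "image f ` Fpow A = Fpow B"
  proof
    show "image f ` Fpow A \<subseteq> Fpow B"
      using assms by (intro image_Fpow_mono) (simp add: bij_betw_def)
    show "Fpow B \<subseteq> image f ` Fpow A"
    proof
      fix C assume "C \<in> Fpow B"
      then have "C = f ` (f -` C \<inter> A)" "f -` C \<inter> A \<in> Fpow A"
        using assms by (auto simp: Fpow_def bij_betw_def intro: finite_vimage_IntI)
      then show "C \<in> image f ` Fpow A" by blast
    qed
  qed
  then show ?thesis
    using assms by (simp add: bij_betw_def inj_on_image_Fpow)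
qed

lemma bij_betw_double_odd: "bij_betw ((*) 2) {x::nat. odd x} {x. x mod 4 = 2}"
  by (rule bij_betw_byWitness[where f' = "\<lambda>x. x div 2"]) (auto, presburger+)

definition split_P3o :: "nat list \<Rightarrow> nat list \<times> nat list" where
  "split_P3o = map_prod partition_of_set (partition_of_set \<circ> image ((*) 2)) \<circ> binary_split \<circ> mset"

lemma P3o_eq: "P3o = {xs. is_partition xs \<and> set xs \<subseteq> {x. odd x} \<and> (\<forall>x. count (mset xs) x \<le> 3)}"
  by (auto simp: P3o_def count_mset)

lemma bij_betw_split_P3o: "bij_betw split_P3o P3o (Do \<times> D42)"
proof -
  let ?odd = "{x::nat. odd x}"
  have Do_eq: "Do = {xs. is_partition xs \<and> distinct xs \<and> set xs \<subseteq> ?odd}"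
    by (auto simp: Do_def)
  have D42_eq: "D42 = {xs. is_partition xs \<and> distinct xs \<and> set xs \<subseteq> {x. x mod 4 = 2}}"
    by (auto simp: D42_def)
  have "bij_betw mset P3o {M. set_mset M \<subseteq> ?odd \<and> (\<forall>x. count M x \<le> 3)}"
    unfolding P3o_eq by (rule bij_betw_mset_partitions) simp
  moreover have "bij_betw (map_prod partition_of_set (partition_of_set \<circ> image ((*) 2)))
                   (Fpow ?odd \<times> Fpow ?odd) (Do \<times> D42)"
    unfolding Do_eq D42_eq
    by (intro bij_betw_map_prod bij_betw_trans[OF bij_betw_image_Fpow[OF bij_betw_double_odd]]
        bij_betw_partition_of_set) auto
  ultimately show ?thesis
    unfolding split_P3o_def by (blast intro: bij_betw_trans bij_betw_binary_split)
qed

lemma weight_split_P3o: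
  assumes "xs \<in> P3o"
  shows "weight (fst (split_P3o xs)) + weight (snd (split_P3o xs)) = weight xs"
proof -
  obtain A H where AH: "binary_split (mset xs) = (A, H)" by fastforce
  have "weight (fst (split_P3o xs)) + weight (snd (split_P3o xs)) = \<Sum>A + \<Sum>((*) 2 ` H)"
    by (simp add: split_P3o_def AH weight_partition_of_set)
  also have "\<dots> = \<Sum>A + 2 * \<Sum>H"
    by (simp add: sum.reindex inj_on_def sum_distrib_left)
  also have "\<dots> = weight xs"
    using sum_mset_binary_split[OF _ AH] assms by (simp add: P3o_eq weight_def sum_mset_sum_list)
  finally show ?thesis .
qed

theorem lemma2p7:
  shows "\<exists>f. bij_betw f P3o (Do \<times> D42) \<and>
             (\<forall>xs\<in>P3o. weight (fst (f xs)) + weight (snd (f xs)) = weight xs)"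
  using bij_betw_split_P3o weight_split_P3o by blast

end
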